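(* Let $t_T=\frac{K_TM_T}{N}$ and $t_R=\frac{K_RM_R}{N}$ be integers with $t_T\ge 1$ and $t_T+t_R\le K_R$, and consider the prefetching and subfile partition described in the context, for an arbitrary demand vector $\mathbf{d}$. Then the set of all small subfiles that need to be delivered, namely $W_{d_j,\mathcal{T},\pi,\pi'}$ (intended for $\text{Rx}_j$) for all $j\in[K_R]$, all $\mathcal{T}\subseteq[K_T]$ with $|\mathcal{T}|=t_T$, all $\mathcal{R}\subseteq[K_R]\setminus\{j\}$ with $|\mathcal{R}|=t_R$, all $\pi\in\Pi_{\mathcal{R}}$ and all $\pi'\in\Pi_{[K_R]\setminus(\mathcal{R}\cup\{j\}),t_T-1}$, can be partitioned into disjoint subsets of size $t_T+t_R$ as $$\bigcup_{\substack{\mathcal{T}\subseteq[K_T]:\ |\mathcal{T}|=t_T\\ \mathcal{R}\subseteq[K_R]:\ |\mathcal{R}|=t_T+t_R\\ \pi\in\Pi^{\mathrm{circ}}_{\mathcal{R}}}}\left\{W_{d_{\pi(l)},\ \mathcal{T}\oplus_{K_T}(l-1),\ \pi[l+1:l+t_R],\ \pi[l+t_R+1:l+t_R+t_T-1]}\ :\ l\in[t_T+t_R]\right\}.$$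
   Context: Setting: $K_T$ transmitters, $K_R$ receivers, a library of $N$ files $W_1,\dots,W_N$ of $F$ packets each ($F$ large enough for all divisions below to be integral), transmitter cache size $M_TF$ packets and receiver cache size $M_RF$ packets. Prefetching: each file $W_n$ is split into $\binom{K_T}{t_T}\binom{K_R}{t_R}$ disjoint equal-size subfiles $W_{n,\mathcal{T},\mathcal{R}}$, one for each $\mathcal{T}\subseteq[K_T]$ with $|\mathcal{T}|=t_T$ and $\mathcal{R}\subseteq[K_R]$ with $|\mathcal{R}|=t_R$. Transmitter $\text{Tx}_i$ caches all $W_{n,\mathcal{T},\mathcal{R}}$ with $i\in\mathcal{T}$; receiver $\text{Rx}_j$ caches all $W_{n,\mathcal{T},\mathcal{R}}$ with $j\in\mathcal{R}$. Receiver $\text{Rx}_j$ requests file $W_{d_j}$ and must receive the subfiles $W_{d_j,\mathcal{T},\mathcal{R}}$ with $j\notin\mathcal{R}$. Notation: for a set $\mathcal{S}$, $\Pi_{\mathcal{S}}$ is the set of permutations (orderings) of $\mathcal{S}$, and for $1\le t\le|\mathcal{S}|$, $\Pi_{\mathcal{S},t}=\bigcup_{\mathcal{A}\subseteq\mathcal{S},|\mathcal{A}|=t}\Pi_{\mathcal{A}}$. $\Pi^{\mathrm{circ}}_{\mathcal{R}}$ is the set of $(|\mathcal{R}|-1)!$ circular permutations of $\mathcal{R}$, each written as a list $\pi=[\pi(1),\dots,\pi(|\mathcal{R}|)]$. For integers $i,j,m$, $i\oplus_m j=1+((i+j-1)\bmod m)$; for a set $\mathcal{T}$, $\mathcal{T}\oplus_m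 j$ is the entrywise application of this operation. For a permutation $\pi$ of a set $\mathcal{S}$ and $j\ge i$, $\pi[i:j]=[\pi(i\oplus_{|\mathcal{S}|}0),\pi(i\oplus_{|\mathcal{S}|}1),\dots,\pi(i\oplus_{|\mathcal{S}|}(j-i))]$. Further partition: for each $j\in[K_R]$, each $\mathcal{T}\subseteq[K_T]$ with $|\mathcal{T}|=t_T$ and each $\mathcal{R}\subseteq[K_R]\setminus\{j\}$ with $|\mathcal{R}|=t_R$, the subfile $W_{d_j,\mathcal{T},\mathcal{R}}$ (to be delivered to $\text{Rx}_j$) is split into $\frac{t_R!\,[K_R-(t_R+1)]!}{[K_R-(t_R+t_T)]!}$ disjoint equal-size smaller subfiles $W_{d_j,\mathcal{T},\pi,\pi'}$, indexed by $\pi\in\Pi_{\mathcal{R}}$ and $\pi'\in\Pi_{[K_R]\setminus(\mathcal{R}\cup\{j\}),t_T-1}$. *)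

theory Defs
  imports Complex_Main
begin

definition oplus :: "nat \<Rightarrow> nat \<Rightarrow> nat \<Rightarrow> nat" where
  "oplus m i j = 1 + ((i + j - 1) mod m)"

definition shift_set :: "nat \<Rightarrow> nat set \<Rightarrow> nat \<Rightarrow> nat set" where
  "shift_set m T j = (\<lambda>t. oplus m t j) ` T"

text \<open>A permutation (ordering) of a set S, written as the list [pi(1),...,pi(|S|)];
  pi(i) is the list entry  p ! (i - 1).\<close>
definition perms :: "'a set \<Rightarrow> 'a list set" where
  "perms S = {p. distinct p \<and> set p = S}"

definition perms_t :: "'a set \<Rightarrow> nat \<Rightarrow> 'a list set" where
  "perms_t S t = {p. distinct p \<and> set p \<subseteq> S \<and> length p = t}"

text \<open>Circular permutations of a (nonempty finite) set of naturals: each rotation class is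
  represented by the unique list in it starting with the minimum of the set.\<close>
definition circ_perms :: "nat set \<Rightarrow> nat list set" where
  "circ_perms R = {p. distinct p \<and> set p = R \<and> p \<noteq> [] \<and> hd p = Min R}"

text \<open>pi[i:j] = [pi(i \<oplus> 0), ..., pi(i \<oplus> (j-i))], with the modulus |S| = length p;
  for j = i - 1 this is the empty list.\<close>
definition slice :: "'a list \<Rightarrow> nat \<Rightarrow> nat \<Rightarrow> 'a list" where
  "slice p i j = map (\<lambda>k. p ! (oplus (length p) i k - 1)) [0..<Suc j - i]"

text \<open>Index of a small subfile to be delivered: (j, T, pi, pi'), standing for
  W_{d_j, T, pi, pi'} intended for receiver Rx_j.\<close>
definition deliverables :: "nat \<Rightarrow> nat \<Rightarrow> nat \<Rightarrow> nat \<Rightarrow> (nat \<times> nat set \<times> nat list \<times> nat list) set" where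
  "deliverables KT KR tT tR =
     {(j, T, p, p') | j T R p p'.
        j \<in> {1..KR} \<and> T \<subseteq> {1..KT} \<and> card T = tT \<and>
        R \<subseteq> {1..KR} - {j} \<and> card R = tR \<and>
        p \<in> perms R \<and> p' \<in> perms_t ({1..KR} - (R \<union> {j})) (tT - 1)}"

definition group_index :: "nat \<Rightarrow> nat \<Rightarrow> nat \<Rightarrow> nat \<Rightarrow> (nat set \<times> nat set \<times> nat list) set" where
  "group_index KT KR tT tR =
     {(T, R, p). T \<subseteq> {1..KT} \<and> card T = tT \<and> R \<subseteq> {1..KR} \<and> card R = tT + tR \<and>
        p \<in> circ_perms R}"

definition block :: "nat \<Rightarrow> nat \<Rightarrow> nat \<Rightarrow> nat set \<times> nat set \<times> nat list
    \<Rightarrow> (nat \<times> nat set \<times> nat list \<times> nat list) set" where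
  "block KT tT tR g = (case g of (T, R, p) \<Rightarrow>
     (\<lambda>l. (p ! (l - 1), shift_set KT T (l - 1), slice p (l + 1) (l + tR),
            slice p (l + tR + 1) (l + tR + tT - 1))) ` {1..tT + tR})"

end

theory Submission
  imports Defs
begin

text \<open>The l-th member of the group (T, R, \<pi>) is read off the rotation q of \<pi> by l - 1: its
  receiver is the head of q, the next t_R entries of q order the caching set, the remaining
  t_T - 1 entries form \<pi>', and its transmitter set is T shifted by l - 1. The heads of the
  t_T + t_R rotations are distinct, so each group has t_T + t_R members. Conversely, a deliverable
  (j, T', \<pi>, \<pi>') determines the list q = j \<pi> \<pi>' of distinct receivers. Exactly one rotation of q
  starts with the minimum of its entries, which pins down the circular permutation and the
  rotation amount l - 1; as shifting is a bijection of [K_T], T is then determined by T' as well.\<close>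

lemma diff_mod_add_mod_eq_0: "0 < (n::nat) \<Longrightarrow> (n - a mod n + a) mod n = 0"
  by (metis add.commute le_add_diff_inverse mod_add_left_eq mod_le_divisor mod_self)

lemma oplus_in_range: "0 < K \<Longrightarrow> oplus K t a \<in> {1..K}"
  by (simp add: oplus_def Suc_leI)

lemma oplus_oplus: "1 \<le> t \<Longrightarrow> oplus K (oplus K t c) a = oplus K t (c + a)"
  by (simp add: oplus_def mod_add_left_eq add.assoc)

lemma oplus_mod_eq_0:
  assumes "t \<in> {1..K}" "c mod K = 0"
  shows "oplus K t c = t"
proof -
  have "(t - 1 + c) mod K = (t - 1) mod K"
    using assms(2) by (simp add: mod_add_right_eq[symmetric])
  moreover have "(t - 1) mod K = t - 1"
    using assms(1) by (intro mod_less) auto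
  ultimately show ?thesis
    using assms(1) by (simp add: oplus_def)
qed

lemma inj_on_oplus: "inj_on (\<lambda>t. oplus K t a) {1..K}"
proof (rule inj_on_inverseI)
  fix t :: nat assume t: "t \<in> {1..K}"
  then have "(a + (K - a mod K)) mod K = 0"
    using diff_mod_add_mod_eq_0[of K a] by (simp add: add.commute)
  then show "oplus K (oplus K t a) (K - a mod K) = t"
    using t by (simp add: oplus_oplus oplus_mod_eq_0)
qed

lemma shift_set_subset: "0 < K \<Longrightarrow> shift_set K T a \<subseteq> {1..K}"
  using oplus_in_range unfolding shift_set_def by blast

lemma card_shift_set: "T \<subseteq> {1..K} \<Longrightarrow> card (shift_set K T a) = card T"
  unfolding shift_set_def by (rule card_image) (use inj_on_oplus inj_on_subset in blast)

lemma shift_set_eq_iff: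
  "T \<subseteq> {1..K} \<Longrightarrow> T' \<subseteq> {1..K} \<Longrightarrow> shift_set K T a = shift_set K T' a \<longleftrightarrow> T = T'"
  unfolding shift_set_def using inj_on_image_eq_iff[OF inj_on_oplus] by blast

lemma shift_set_shift_set_inverse:
  assumes "T \<subseteq> {1..K}" "0 < K"
  shows "shift_set K (shift_set K T (K - a mod K)) a = T"
proof -
  have "oplus K (oplus K t (K - a mod K)) a = t" if "t \<in> T" for t
    using that assms diff_mod_add_mod_eq_0[of K a] by (auto simp: oplus_oplus oplus_mod_eq_0)
  then show ?thesis unfolding shift_set_def image_image by simp
qed

lemma rotate_eq_self_if_hd_eq:
  assumes "distinct q" "hd (rotate k q) = hd q"
  shows "rotate k q = q"
proof (cases "q = []")
  case False
  then have "q ! (k mod length q) = q ! 0"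
    using assms(2) hd_rotate_conv_nth[OF False, of k] by (simp add: hd_conv_nth)
  then have "k mod length q = 0"
    using assms(1) False by (simp add: nth_eq_iff_index_eq)
  then show ?thesis by simp
qed simp

lemma circ_perms_rotate_eq:
  assumes "p \<in> circ_perms R" "p' \<in> circ_perms R'" "rotate a p = rotate b p'"
  shows "p = p'"
proof -
  let ?c = "length p - a mod length p"
  have p: "distinct p" "p \<noteq> []" "hd p = Min (set p)" and p': "distinct p'" "hd p' = Min (set p')"
    using assms(1,2) by (auto simp: circ_perms_def)
  have "p = rotate ?c (rotate a p)"
    using diff_mod_add_mod_eq_0[of "length p" a] p(2) by (simp add: rotate_rotate)
  also have "\<dots> = rotate (?c + b) p'"
    by (simp add: assms(3) rotate_rotate)
  finally have p_rot: "p = rotate (?c + b) p'" .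
  then have "hd (rotate (?c + b) p') = hd p'"
    using p(3) p'(2) by (metis set_rotate)
  then show ?thesis
    using p_rot p'(1) rotate_eq_self_if_hd_eq by metis
qed

lemma rotate_to_circ_perm:
  assumes "distinct q" "q \<noteq> []"
  obtains p a where "p \<in> circ_perms (set q)" "a < length q" "rotate a p = q"
proof -
  let ?n = "length q"
  obtain i where i: "i < ?n" "q ! i = Min (set q)"
    using Min_in[of "set q"] assms(2) by (auto simp: in_set_conv_nth)
  have "rotate i q \<in> circ_perms (set q)"
    using assms i by (simp add: circ_perms_def hd_rotate_conv_nth)
  moreover have "(?n - i mod ?n) mod ?n < ?n"
    using assms(2) by simp
  moreover have "rotate ((?n - i mod ?n) mod ?n) (rotate i q) = q"
    using diff_mod_add_mod_eq_0[of ?n i] assms(2) by (simp add: rotate_rotate mod_add_left_eq)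
  ultimately show ?thesis by (rule that)
qed

lemma hd_rotate_inj:
  assumes "distinct p" "a < length p" "b < length p" "hd (rotate a p) = hd (rotate b p)"
  shows "a = b"
proof -
  have "p \<noteq> []"
    using assms(2) by auto
  then have "p ! a = p ! b"
    using assms(2-4) by (simp add: hd_rotate_conv_nth)
  then show ?thesis
    using assms(1-3) by (simp add: nth_eq_iff_index_eq)
qed

definition rotation_member ::
    "nat \<Rightarrow> nat \<Rightarrow> nat set \<Rightarrow> nat list \<Rightarrow> nat \<Rightarrow> nat \<times> nat set \<times> nat list \<times> nat list" where
  "rotation_member KT tR T p a =
     (hd (rotate a p), shift_set KT T a, take tR (tl (rotate a p)), drop (Suc tR) (rotate a p))"

lemma slice_eq_take_drop_rotate:
  assumes "i + m \<le> length p"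
  shows "slice p (Suc a + i) (a + i + m) = take m (drop i (rotate a p))"
proof (rule nth_equalityI)
  show "length (slice p (Suc a + i) (a + i + m)) = length (take m (drop i (rotate a p)))"
    using assms by (simp add: slice_def)
  fix k assume "k < length (slice p (Suc a + i) (a + i + m))"
  then have "k < m" by (simp add: slice_def)
  then show "slice p (Suc a + i) (a + i + m) ! k = take m (drop i (rotate a p)) ! k"
    using assms nth_rotate[of "i + k" p a] by (simp add: slice_def oplus_def add.assoc)
qed

lemma block_eq_image_rotation_member:
  assumes "length p = tT + tR" "1 \<le> tT"
  shows "block KT tT tR (T, R, p) = rotation_member KT tR T p ` {..<tT + tR}"
proof -
  have member: "(p ! a, shift_set KT T a, slice p (Suc a + 1) (Suc a + tR),
      slice p (Suc a + tR + 1) (Suc a + tR + tT - 1)) = rotation_member KT tR T p a"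
    if "a < tT + tR" for a
  proof -
    have "p \<noteq> []"
      using that assms(1) by auto
    then have "p ! a = hd (rotate a p)"
      using that assms(1) by (simp add: hd_rotate_conv_nth)
    moreover have "slice p (Suc a + 1) (Suc a + tR) = take tR (tl (rotate a p))"
      using slice_eq_take_drop_rotate[of 1 tR p a] assms by (simp add: drop_Suc)
    moreover have "slice p (Suc a + tR + 1) (Suc a + tR + tT - 1) = drop (Suc tR) (rotate a p)"
      using slice_eq_take_drop_rotate[of "Suc tR" "tT - 1" p a] assms by simp
    ultimately show ?thesis by (simp add: rotation_member_def)
  qed
  have range: "{1..tT + tR} = Suc ` {..<tT + tR}"
    by (simp add: lessThan_atLeast0 image_Suc_atLeastLessThan atLeastLessThanSuc_atLeastAtMost)
  show ?thesis
    unfolding block_def split_conv range image_image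
    by (rule image_cong[OF refl]) (use member in simp)
qed

lemma group_indexD:
  assumes "(T, R, p) \<in> group_index KT KR tT tR"
  shows "p \<in> circ_perms R" "length p = tT + tR" "T \<subseteq> {1..KT}" "card T = tT" "R \<subseteq> {1..KR}"
proof -
  have "p \<in> circ_perms R" "T \<subseteq> {1..KT}" "card T = tT" "R \<subseteq> {1..KR}" "card R = tT + tR"
    using assms by (simp_all add: group_index_def)
  moreover have "length p = card R"
    using \<open>p \<in> circ_perms R\<close> distinct_card[of p] by (simp add: circ_perms_def)
  ultimately show "p \<in> circ_perms R" "length p = tT + tR" "T \<subseteq> {1..KT}" "card T = tT"
    "R \<subseteq> {1..KR}"
    by simp_all
qed

lemma rotation_member_inj_on:
  assumes "(T, R, p) \<in> group_index KT KR tT tR"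
  shows "inj_on (rotation_member KT tR T p) {..<tT + tR}"
proof (rule inj_onI)
  have "distinct p"
    using group_indexD(1)[OF assms] by (simp add: circ_perms_def)
  fix a b
  assume "a \<in> {..<tT + tR}" "b \<in> {..<tT + tR}"
    and "rotation_member KT tR T p a = rotation_member KT tR T p b"
  then have "a < length p" "b < length p" "hd (rotate a p) = hd (rotate b p)"
    using group_indexD(2)[OF assms] by (simp_all add: rotation_member_def)
  then show "a = b"
    by (rule hd_rotate_inj[OF \<open>distinct p\<close>])
qed

lemma card_block:
  assumes "g \<in> group_index KT KR tT tR" "1 \<le> tT"
  shows "card (block KT tT tR g) = tT + tR"
proof -
  obtain T R p where g: "g = (T, R, p)" by (cases g)
  have G: "(T, R, p) \<in> group_index KT KR tT tR"
    using assms(1) g by simp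
  have "card (rotation_member KT tR T p ` {..<tT + tR}) = tT + tR"
    using card_image[OF rotation_member_inj_on[OF G]] by simp
  then show ?thesis
    using block_eq_image_rotation_member[OF group_indexD(2)[OF G] assms(2)] g by simp
qed

lemma rotation_member_eq_imp_rotate_eq:
  assumes "p \<noteq> []" "p' \<noteq> []" "rotation_member KT tR T p a = rotation_member KT tR T' p' b"
  shows "rotate a p = rotate b p'" "shift_set KT T a = shift_set KT T' b"
proof -
  have rebuild: "(case rotation_member KT tR T q c of (j, _, \<pi>, \<pi>') \<Rightarrow> j # \<pi> @ \<pi>') = rotate c q"
    if "q \<noteq> []" for q :: "nat list" and T c
  proof -
    have "rotate c q \<noteq> []"
      using that by simp
    then show ?thesis
      unfolding rotation_member_def split_conv by (cases "rotate c q") simp_all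
  qed
  have "rotate a p = (case rotation_member KT tR T p a of (j, _, \<pi>, \<pi>') \<Rightarrow> j # \<pi> @ \<pi>')"
    by (rule rebuild[OF assms(1), symmetric])
  also have "\<dots> = rotate b p'"
    unfolding assms(3) by (rule rebuild[OF assms(2)])
  finally show "rotate a p = rotate b p'" .
  show "shift_set KT T a = shift_set KT T' b"
    using assms(3) by (simp add: rotation_member_def)
qed

lemma block_disjoint:
  assumes "g \<in> group_index KT KR tT tR" "h \<in> group_index KT KR tT tR" "g \<noteq> h" "1 \<le> tT"
  shows "block KT tT tR g \<inter> block KT tT tR h = {}"
proof (rule ccontr)
  obtain T R p where g: "g = (T, R, p)" by (cases g)
  obtain T' R' p' where h: "h = (T', R', p')" by (cases h)
  note G = group_indexD[OF assms(1)[unfolded g]] and H = group_indexD[OF assms(2)[unfolded h]]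
  have "block KT tT tR g = rotation_member KT tR T p ` {..<tT + tR}"
    "block KT tT tR h = rotation_member KT tR T' p' ` {..<tT + tR}"
    unfolding g h by (rule block_eq_image_rotation_member[OF G(2) assms(4)],
      rule block_eq_image_rotation_member[OF H(2) assms(4)])
  moreover assume "block KT tT tR g \<inter> block KT tT tR h \<noteq> {}"
  ultimately obtain x where "x \<in> rotation_member KT tR T p ` {..<tT + tR}"
    "x \<in> rotation_member KT tR T' p' ` {..<tT + tR}"
    by blast
  then obtain a b where ab: "a < tT + tR" "b < tT + tR"
    and eq: "rotation_member KT tR T p a = rotation_member KT tR T' p' b"
    by (metis imageE lessThan_iff)
  have ne: "p \<noteq> []" "p' \<noteq> []"
    using G(2) H(2) assms(4) by auto
  note rot = rotation_member_eq_imp_rotate_eq[OF ne eq]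
  have "p = p'"
    using circ_perms_rotate_eq[OF G(1) H(1) rot(1)] .
  moreover have "R = R'"
    using G(1) H(1) \<open>p = p'\<close> by (simp add: circ_perms_def)
  moreover have "a = b"
    using hd_rotate_inj[of p a b] rot(1) ab G(1,2) \<open>p = p'\<close>
    by (simp add: circ_perms_def)
  moreover have "T = T'"
    using rot(2) shift_set_eq_iff[OF G(3) H(3)] \<open>a = b\<close> by simp
  ultimately show False
    using assms(3) g h by simp
qed

lemma rotation_member_in_deliverables:
  assumes "(T, R, p) \<in> group_index KT KR tT tR" "1 \<le> tT" "a < tT + tR"
  shows "rotation_member KT tR T p a \<in> deliverables KT KR tT tR"
proof -
  note G = group_indexD[OF assms(1)]
  define q where "q = rotate a p"
  define j \<pi> \<pi>' where "j = hd q" and "\<pi> = take tR (tl q)" and "\<pi>' = drop (Suc tR) q"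
  have "q \<noteq> []"
    using G(2) assms(2) by (auto simp: q_def)
  then have q: "q = j # \<pi> @ \<pi>'"
    unfolding j_def \<pi>_def \<pi>'_def by (cases q) auto
  have dist: "distinct (j # \<pi> @ \<pi>')" and sub: "set (j # \<pi> @ \<pi>') \<subseteq> {1..KR}"
    using G(1,5) unfolding q[symmetric] q_def by (auto simp: circ_perms_def)
  have len: "length \<pi> = tR" "length \<pi>' = tT - 1"
    using G(2) assms(2) by (simp_all add: \<pi>_def \<pi>'_def q_def)
  have "0 < KT"
    using G(3,4) assms(2) by (cases KT) auto
  then have "shift_set KT T a \<subseteq> {1..KT}" "card (shift_set KT T a) = tT"
    using shift_set_subset card_shift_set G(3,4) by auto
  moreover have "set \<pi> \<subseteq> {1..KR} - {j}" "card (set \<pi>) = tR" "\<pi> \<in> perms (set \<pi>)"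
    using dist sub len(1) distinct_card[of \<pi>] by (auto simp: perms_def)
  moreover have "\<pi>' \<in> perms_t ({1..KR} - (set \<pi> \<union> {j})) (tT - 1)"
    using dist sub len(2) by (auto simp: perms_t_def)
  moreover have "rotation_member KT tR T p a = (j, shift_set KT T a, \<pi>, \<pi>')"
    by (simp add: rotation_member_def j_def \<pi>_def \<pi>'_def q_def)
  moreover have "j \<in> {1..KR}"
    using sub by simp
  ultimately show ?thesis
    unfolding deliverables_def by blast
qed

lemma block_subset_deliverables:
  assumes "g \<in> group_index KT KR tT tR" "1 \<le> tT"
  shows "block KT tT tR g \<subseteq> deliverables KT KR tT tR"
proof -
  obtain T R p where g: "g = (T, R, p)" by (cases g)
  show ?thesis
    using assms rotation_member_in_deliverables[of T R p KT KR tT tR]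
      block_eq_image_rotation_member[OF group_indexD(2)[OF assms(1)[unfolded g]] assms(2)]
    by (auto simp: g)
qed

lemma deliverable_in_block:
  assumes "x \<in> deliverables KT KR tT tR" "1 \<le> tT"
  shows "\<exists>g \<in> group_index KT KR tT tR. x \<in> block KT tT tR g"
proof -
  obtain j T' R\<^sub>0 \<pi> \<pi>' where x: "x = (j, T', \<pi>, \<pi>')" and j: "j \<in> {1..KR}"
    and T': "T' \<subseteq> {1..KT}" "card T' = tT" and R\<^sub>0: "R\<^sub>0 \<subseteq> {1..KR} - {j}" "card R\<^sub>0 = tR"
    and \<pi>: "\<pi> \<in> perms R\<^sub>0" and \<pi>': "\<pi>' \<in> perms_t ({1..KR} - (R\<^sub>0 \<union> {j})) (tT - 1)"
    using assms(1) unfolding deliverables_def by blast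
  define q where "q = j # \<pi> @ \<pi>'"
  have "length \<pi> = tR"
    using \<pi> R\<^sub>0(2) distinct_card[of \<pi>] by (auto simp: perms_def)
  then have len: "length q = tT + tR"
    using \<pi>' assms(2) by (simp add: q_def perms_t_def)
  have dist: "distinct q" and sub: "set q \<subseteq> {1..KR}"
    using j R\<^sub>0(1) \<pi> \<pi>' by (auto simp: q_def perms_def perms_t_def)
  obtain p a where p: "p \<in> circ_perms (set q)" and a: "a < length q" and rot: "rotate a p = q"
    using rotate_to_circ_perm[OF dist] by (auto simp: q_def)
  have "0 < KT"
    using T' assms(2) by (cases KT) auto
  define T where "T = shift_set KT T' (KT - a mod KT)"
  have g: "(T, set q, p) \<in> group_index KT KR tT tR"
    using shift_set_subset[OF \<open>0 < KT\<close>] card_shift_set[OF T'(1)] T'(2) p sub len dist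
      distinct_card[of q]
    by (simp add: group_index_def T_def)
  have "rotation_member KT tR T p a = x"
    using rot \<open>length \<pi> = tR\<close> shift_set_shift_set_inverse[OF T'(1) \<open>0 < KT\<close>, of a]
    by (simp add: rotation_member_def x q_def T_def)
  then have "x \<in> block KT tT tR (T, set q, p)"
    using a len assms(2) group_indexD(2)[OF g] by (auto simp: block_eq_image_rotation_member)
  then show ?thesis
    using g by blast
qed

theorem lemma1:
  fixes KT KR N tT tR :: nat and MT MR :: real
  assumes "N > 0"
    and "real tT = real KT * MT / real N"
    and "real tR = real KR * MR / real N"
    and "tT \<ge> 1" and "tT + tR \<le> KR"
  shows "(\<forall>g \<in> group_index KT KR tT tR. card (block KT tT tR g) = tT + tR)
       \<and> (\<forall>g \<in> group_index KT KR tT tR. \<forall>h \<in> group_index KT KR tT tR.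
            g \<noteq> h \<longrightarrow> block KT tT tR g \<inter> block KT tT tR h = {})
       \<and> (\<Union>g \<in> group_index KT KR tT tR. block KT tT tR g) = deliverables KT KR tT tR"
proof (intro conjI ballI impI)
  show "card (block KT tT tR g) = tT + tR" if "g \<in> group_index KT KR tT tR" for g
    by (rule card_block[OF that \<open>tT \<ge> 1\<close>])
  show "block KT tT tR g \<inter> block KT tT tR h = {}"
    if "g \<in> group_index KT KR tT tR" "h \<in> group_index KT KR tT tR" "g \<noteq> h" for g h
    by (rule block_disjoint[OF that \<open>tT \<ge> 1\<close>])
  show "(\<Union>g \<in> group_index KT KR tT tR. block KT tT tR g) = deliverables KT KR tT tR"
  proof
    show "(\<Union>g \<in> group_index KT KR tT tR. block KT tT tR g) \<subseteq> deliverables KT KR tT tR"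
      using block_subset_deliverables[OF _ \<open>tT \<ge> 1\<close>] by (rule UN_least)
    show "deliverables KT KR tT tR \<subseteq> (\<Union>g \<in> group_index KT KR tT tR. block KT tT tR g)"
      using deliverable_in_block[OF _ \<open>tT \<ge> 1\<close>] by blast
  qed
qed

end
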